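(* Let $\alpha\in(0,1]$, $M>0$, let $P_W$ be the uniform distribution on $[0,1]$ and let $R_\gamma$ be the Poisson distribution with mean $\gamma\in J=(0,+\infty)$. Then for all $n\ge1$, $$\mathcal R_n(\mathcal H_\alpha(M))\ge\frac{1-e^{-1}}{144}\left[\left(\frac{3M^{1/\alpha}}{2^{4+\alpha+3/\alpha}n}\right)^{\frac{\alpha}{1+\alpha}}\wedge\frac M8\wedge\Big(1+\frac{\sqrt3}{2}\Big)\right].$$
   Context: $\mathcal H_\alpha(M)$ is the set of functions $\gamma:[0,1]\to(0,+\infty)$ with $|\gamma(x)-\gamma(y)|\le M|x-y|^\alpha$ for all $x,y$. Data: $X_i=(W_i,Y_i)$, $i\le n$, i.i.d., $W_i\sim P_W$ and $Y_i\mid W_i=w$ Poisson with mean $\gamma^\star(w)$. $\mathcal R_n(\mathcal H_\alpha(M))=\inf_{\widetilde\gamma}\sup_{\gamma^\star\in\mathcal H_\alpha(M)}\mathbb E[h^2(R_{\gamma^\star},R_{\widetilde\gamma})]$, the infimum over all estimators $\widetilde\gamma$ based on $X_1,\ldots,X_n$ with values in functions $[0,1]\to(0,\infty)$, where $h^2(R_\gamma,R_{\gamma'})=\int_0^1h^2(R_{\gamma(w)},R_{\gamma'(w)})dP_W(w)$ and $h$ is the Hellinger distance $h^2(P,R)=\frac12\int(\sqrt p-\sqrt r)^2d\mu$. *)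

theory Defs
  imports "HOL-Probability.Probability"
begin

text \<open>Hoelder class H_alpha(M): positive functions on [0,1] (represented as real functions;
  only their values on [0,1] matter).\<close>
definition holder_class :: "real \<Rightarrow> real \<Rightarrow> (real \<Rightarrow> real) set" where
  "holder_class \<alpha> M = {\<gamma>. (\<forall>x\<in>{0..1}. 0 < \<gamma> x) \<and>
      (\<forall>x\<in>{0..1}. \<forall>y\<in>{0..1}. \<bar>\<gamma> x - \<gamma> y\<bar> \<le> M * \<bar>x - y\<bar> powr \<alpha>)}"

definition hellinger_sq :: "nat pmf \<Rightarrow> nat pmf \<Rightarrow> real" where
  "hellinger_sq p q = 1/2 * (\<Sum>k. (sqrt (pmf p k) - sqrt (pmf q k))^2)"

definition PW :: "real measure" where
  "PW = uniform_measure lborel {0..1}"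

definition poisson_loss :: "(real \<Rightarrow> real) \<Rightarrow> (real \<Rightarrow> real) \<Rightarrow> ennreal" where
  "poisson_loss \<gamma> \<gamma>' = (\<integral>\<^sup>+ w. ennreal (hellinger_sq (poisson_pmf (\<gamma> w)) (poisson_pmf (\<gamma>' w))) \<partial>PW)"

text \<open>Law of one observation X = (W,Y): W ~ P_W, Y | W = w ~ Poisson(gamma w).\<close>
definition obs_law :: "(real \<Rightarrow> real) \<Rightarrow> (real \<times> nat) measure" where
  "obs_law \<gamma> = density (lborel \<Otimes>\<^sub>M count_space UNIV)
      (\<lambda>(w, k). indicator {0..1} w * ennreal (pmf (poisson_pmf (\<gamma> w)) k))"

definition data_space :: "nat \<Rightarrow> (nat \<Rightarrow> real \<times> nat) measure" where
  "data_space n = PiM {..<n} (\<lambda>_. borel \<Otimes>\<^sub>M count_space UNIV)"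

definition estimators :: "nat \<Rightarrow> ((nat \<Rightarrow> real \<times> nat) \<Rightarrow> real \<Rightarrow> real) set" where
  "estimators n = {est.
      (\<lambda>(x, w). est x w) \<in> borel_measurable (data_space n \<Otimes>\<^sub>M borel) \<and>
      (\<forall>x\<in>space (data_space n). \<forall>w\<in>{0..1}. 0 < est x w)}"

definition risk :: "nat \<Rightarrow> (real \<Rightarrow> real) \<Rightarrow> ((nat \<Rightarrow> real \<times> nat) \<Rightarrow> real \<Rightarrow> real) \<Rightarrow> ennreal" where
  "risk n \<gamma> est = (\<integral>\<^sup>+ x. poisson_loss \<gamma> (est x) \<partial>(PiM {..<n} (\<lambda>_. obs_law \<gamma>)))"

definition minimax_risk :: "nat \<Rightarrow> (real \<Rightarrow> real) set \<Rightarrow> ennreal" where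
  "minimax_risk n H = (\<Sqinter>est\<in>estimators n. \<Squnion>\<gamma>\<in>H. risk n \<gamma> est)"

end

(* Assouad's method. Split [0,1] into m cells and put on cell j a tent of height
   H = M (2m)^(-alpha) above the constant level H/16; the 2^m functions obtained by switching
   the tents on and off all lie in the Hoelder class. On a cell where two such hypotheses differ,
   every estimate is at Hellinger distance of order 1 - exp(-H/8) from one of them, while the laws
   of the n-samples still overlap by (1 - H/m)^n >= 1/2 as long as n H <= m/2. Averaging over
   the hypercube bounds the maximal risk of any estimator by (1 - exp(-H/8))/16 from below, and
   the choice m ~ (n M)^(1/(1+alpha)) turns this into the rate n^(-alpha/(1+alpha)). *)

theory Submission
  imports Defs
begin

section \<open>Poisson laws and their Hellinger distance\<close>

(* Total in the rate, unlike poisson_pmf, which is specified only for positive rates. *)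
definition poisson_mass :: "real \<Rightarrow> nat \<Rightarrow> real" where
  "poisson_mass r k = r ^ k / fact k * exp (-r)"

definition poisson_hellinger :: "real \<Rightarrow> real \<Rightarrow> real" where
  "poisson_hellinger a b = 1 - exp (-((sqrt a - sqrt b)^2) / 2)"

lemma pmf_poisson_pmf_eq_mass: "0 < r \<Longrightarrow> pmf (poisson_pmf r) k = poisson_mass r k"
  by (simp add: poisson_mass_def)

lemma poisson_mass_nonneg: "0 \<le> r \<Longrightarrow> 0 \<le> poisson_mass r k"
  by (simp add: poisson_mass_def)

lemma sums_exp_real: "(\<lambda>k. x ^ k / fact k) sums exp (x::real)"
  using exp_converges[of x] by (simp add: scaleR_conv_of_real divide_inverse mult.commute)

lemma poisson_mass_sums: "(\<lambda>k. poisson_mass r k) sums 1"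
proof -
  have "(\<lambda>k. r ^ k / fact k * exp (-r)) sums (exp r * exp (-r))"
    by (rule sums_mult2[OF sums_exp_real])
  then show ?thesis by (simp add: poisson_mass_def exp_minus_inverse)
qed

lemma sqrt_poisson_mass_mult:
  assumes "0 \<le> a" "0 \<le> b"
  shows "sqrt (poisson_mass a k) * sqrt (poisson_mass b k) = sqrt (a*b) ^ k / fact k * exp (-(a+b)/2)"
proof -
  have sqrt_exp: "sqrt (exp (-x)) = exp (-x/2)" for x :: real
    by (metis exp_ge_zero real_sqrt_unique power2_eq_square exp_add[symmetric] field_sum_of_halves)
  have "sqrt (poisson_mass a k) * sqrt (poisson_mass b k)
      = sqrt a ^ k * sqrt b ^ k / fact k * (exp (-a/2) * exp (-b/2))"
    using assms by (simp add: poisson_mass_def real_sqrt_mult real_sqrt_divide real_sqrt_power sqrt_exp)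
  also have "\<dots> = sqrt (a*b) ^ k / fact k * exp (-(a+b)/2)"
    by (simp add: real_sqrt_mult power_mult_distrib exp_add[symmetric] field_simps)
  finally show ?thesis .
qed

lemma sums_poisson_sqrt_diff_sq:
  assumes "0 \<le> a" "0 \<le> b"
  shows "(\<lambda>k. (sqrt (poisson_mass a k) - sqrt (poisson_mass b k))^2) sums (2 * poisson_hellinger a b)"
proof -
  have affinity: "(\<lambda>k. sqrt (poisson_mass a k) * sqrt (poisson_mass b k))
      sums (exp (sqrt (a*b)) * exp (-(a+b)/2))"
    unfolding sqrt_poisson_mass_mult[OF assms] by (rule sums_mult2[OF sums_exp_real])
  have expand: "(sqrt (poisson_mass a k) - sqrt (poisson_mass b k))^2
      = poisson_mass a k + poisson_mass b k - 2 * (sqrt (poisson_mass a k) * sqrt (poisson_mass b k))" for k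
    using assms by (simp add: power2_diff poisson_mass_nonneg)
  have "(sqrt a - sqrt b)^2 = a + b - 2 * sqrt (a*b)"
    using assms by (simp add: power2_diff real_sqrt_mult)
  then have "1 + 1 - 2 * (exp (sqrt (a*b)) * exp (-(a+b)/2)) = 2 * poisson_hellinger a b"
    by (simp add: poisson_hellinger_def exp_add[symmetric] field_simps)
  moreover have "(\<lambda>k. poisson_mass a k + poisson_mass b k
      - 2 * (sqrt (poisson_mass a k) * sqrt (poisson_mass b k)))
      sums (1 + 1 - 2 * (exp (sqrt (a*b)) * exp (-(a+b)/2)))"
    by (intro sums_diff sums_add poisson_mass_sums sums_mult affinity)
  ultimately show ?thesis unfolding expand by simp
qed

lemma hellinger_sq_poisson_pmf:
  assumes "0 < a" "0 < b"
  shows "hellinger_sq (poisson_pmf a) (poisson_pmf b) = poisson_hellinger a b"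
proof -
  have "hellinger_sq (poisson_pmf a) (poisson_pmf b)
      = 1/2 * (\<Sum>k. (sqrt (poisson_mass a k) - sqrt (poisson_mass b k))^2)"
    using assms by (simp only: hellinger_sq_def pmf_poisson_pmf_eq_mass)
  then show ?thesis
    using sums_unique[OF sums_poisson_sqrt_diff_sq[of a b]] assms by simp
qed

lemma poisson_hellinger_nonneg: "0 \<le> poisson_hellinger a b"
  by (simp add: poisson_hellinger_def)

lemma poisson_hellinger_quasi_triangle:
  assumes "0 \<le> a" "0 \<le> b" "0 \<le> c"
  shows "poisson_hellinger a b \<le> 2 * (poisson_hellinger a c + poisson_hellinger b c)"
proof -
  let ?x = "\<lambda>k. sqrt (poisson_mass a k)" and ?y = "\<lambda>k. sqrt (poisson_mass b k)"
    and ?z = "\<lambda>k. sqrt (poisson_mass c k)"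
  have pointwise: "(?x k - ?y k)^2 \<le> 2 * ((?x k - ?z k)^2 + (?y k - ?z k)^2)" for k
  proof -
    have "2 * ((?x k - ?z k)^2 + (?y k - ?z k)^2) - (?x k - ?y k)^2 = (?x k + ?y k - 2 * ?z k)^2"
      by (simp add: power2_eq_square algebra_simps)
    then show ?thesis by (metis diff_ge_0_iff_ge zero_le_power2)
  qed
  have "(\<lambda>k. 2 * ((?x k - ?z k)^2 + (?y k - ?z k)^2))
      sums (2 * (2 * poisson_hellinger a c + 2 * poisson_hellinger b c))"
    by (intro sums_mult sums_add sums_poisson_sqrt_diff_sq assms)
  from sums_le[OF pointwise sums_poisson_sqrt_diff_sq[OF assms(1,2)] this] show ?thesis
    by simp
qed

lemma poisson_hellinger_tent:
  assumes "0 < H" "H / 2 \<le> b"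
  shows "1 - exp (-(H/8)) \<le> poisson_hellinger (H/16) (H/16 + b)"
proof -
  have "sqrt (9 * H / 16) \<le> sqrt (H/16 + b)"
    using assms by (intro real_sqrt_le_mono) auto
  moreover have "sqrt (9 * H / 16) = 3 / 4 * sqrt H" "sqrt (H/16) = sqrt H / 4"
    by (simp_all add: real_sqrt_divide real_sqrt_mult)
  ultimately have "sqrt H / 2 \<le> sqrt (H/16 + b) - sqrt (H/16)" "0 \<le> sqrt H / 2"
    using assms by simp_all
  then have "(sqrt H / 2)^2 \<le> (sqrt (H/16 + b) - sqrt (H/16))^2"
    by (intro power_mono)
  moreover have "(sqrt H / 2)^2 = H / 4" using assms by (simp add: power_divide)
  ultimately show ?thesis by (simp add: poisson_hellinger_def power2_commute)
qed

lemma poisson_mass_rate_mono: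
  assumes "0 \<le> a" "a \<le> b"
  shows "exp (-(b - a)) * poisson_mass a k \<le> poisson_mass b k"
proof -
  have "exp (-(b - a)) * poisson_mass a k = a ^ k / fact k * exp (-b)"
    by (simp add: poisson_mass_def mult_exp_exp)
  also have "\<dots> \<le> b ^ k / fact k * exp (-b)"
    using assms by (intro mult_right_mono divide_right_mono power_mono) auto
  finally show ?thesis by (simp add: poisson_mass_def)
qed

section \<open>A hypercube of Hoelder functions\<close>

definition cell :: "nat \<Rightarrow> nat \<Rightarrow> real set" where
  "cell m j = {real j / real m ..< (real j + 1) / real m}"

definition cell_core :: "nat \<Rightarrow> nat \<Rightarrow> real set" where
  "cell_core m j = {(real j + 1/4) / real m .. (real j + 3/4) / real m}"

definition tent :: "real \<Rightarrow> nat \<Rightarrow> nat \<Rightarrow> real \<Rightarrow> real" where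
  "tent H m j w = max 0 (H - 2 * H * real m * \<bar>w - (real j + 1/2) / real m\<bar>)"

definition hypercube_fun :: "real \<Rightarrow> real \<Rightarrow> nat \<Rightarrow> nat set \<Rightarrow> real \<Rightarrow> real" where
  "hypercube_fun c H m \<sigma> w = c + (\<Sum>j\<in>\<sigma>. tent H m j w)"

definition tent_height :: "real \<Rightarrow> real \<Rightarrow> nat \<Rightarrow> real" where
  "tent_height \<alpha> M m = M * (1 / (2 * real m)) powr \<alpha>"

lemma cell_iff: "1 \<le> m \<Longrightarrow> w \<in> cell m j \<longleftrightarrow> real j \<le> real m * w \<and> real m * w < real j + 1"
  by (auto simp: cell_def field_simps)

lemma cells_disjoint: "1 \<le> m \<Longrightarrow> w \<in> cell m i \<Longrightarrow> w \<in> cell m j \<Longrightarrow> i = j"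
  by (simp add: cell_iff)

lemma cell_subset_unit:
  assumes "1 \<le> m" "j < m"
  shows "cell m j \<subseteq> {0..1}"
proof
  fix w assume "w \<in> cell m j"
  then have "real j \<le> real m * w" "real m * w < real j + 1" "real j + 1 \<le> real m"
    using assms by (auto simp: cell_iff)
  then have "0 \<le> real m * w" "real m * w \<le> real m * 1"
    by linarith+
  then show "w \<in> {0..1}"
    using assms by (auto simp: zero_le_mult_iff mult_le_cancel_left_pos)
qed

lemma cell_core_subset_cell: "1 \<le> m \<Longrightarrow> cell_core m j \<subseteq> cell m j"
  by (auto simp: cell_core_def cell_def field_simps)

lemma emeasure_cell: "1 \<le> m \<Longrightarrow> emeasure lborel (cell m j) = ennreal (1 / real m)"
  by (simp add: cell_def field_simps diff_divide_distrib[symmetric])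

lemma emeasure_cell_core: "1 \<le> m \<Longrightarrow> emeasure lborel (cell_core m j) = ennreal (1 / (2 * real m))"
  by (simp add: cell_core_def field_simps diff_divide_distrib[symmetric])

lemma cell_measurable [measurable]: "cell m j \<in> sets borel"
  by (simp add: cell_def)

lemma cell_core_measurable [measurable]: "cell_core m j \<in> sets borel"
  by (simp add: cell_core_def)

lemma abs_diff_scaled:
  assumes "0 < (m::real)"
  shows "m * \<bar>w - x / m\<bar> = \<bar>m * w - x\<bar>"
proof -
  have "m * \<bar>w - x / m\<bar> = \<bar>m * (w - x / m)\<bar>" using assms by (simp add: abs_mult)
  also have "m * (w - x / m) = m * w - x" using assms by (simp add: field_simps)
  finally show ?thesis .
qed

lemma abs_max0_diff_le: "\<bar>max 0 a - max 0 b\<bar> \<le> \<bar>a - (b::real)\<bar>"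
  by (auto simp: max_def abs_if)

lemma tent_nonneg: "0 \<le> tent H m j w"
  by (simp add: tent_def)

lemma tent_le: "0 \<le> H \<Longrightarrow> tent H m j w \<le> H"
  by (simp add: tent_def)

lemma tent_pos_imp_cell:
  assumes "0 < tent H m j w" "1 \<le> m" "0 \<le> H"
  shows "w \<in> cell m j"
proof -
  have m: "0 < real m" using assms by simp
  have pos: "0 < H - 2 * H * (real m * \<bar>w - (real j + 1/2) / real m\<bar>)"
    using assms(1) by (simp add: tent_def mult.assoc)
  have "0 \<le> 2 * H * (real m * \<bar>w - (real j + 1/2) / real m\<bar>)"
    using assms(3) m by simp
  then have "0 < H" using pos by linarith
  have "H * (2 * (real m * \<bar>w - (real j + 1/2) / real m\<bar>)) < H * 1"
    using pos by (simp add: algebra_simps)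
  then have "real m * \<bar>w - (real j + 1/2) / real m\<bar> < 1/2"
    using \<open>0 < H\<close> by (simp only: mult_less_cancel_left_pos)
  then have "\<bar>real m * w - (real j + 1/2)\<bar> < 1/2"
    using abs_diff_scaled[OF m] by simp
  then have "real j < real m * w \<and> real m * w < real j + 1"
    unfolding abs_less_iff by linarith
  then show ?thesis using assms(2) by (simp add: cell_iff)
qed

lemma tent_outside_cell: "w \<notin> cell m j \<Longrightarrow> 1 \<le> m \<Longrightarrow> 0 \<le> H \<Longrightarrow> tent H m j w = 0"
  using tent_pos_imp_cell[of H m j w] tent_nonneg[of H m j w] by linarith

lemma tent_le_indicator: "0 \<le> H \<Longrightarrow> 1 \<le> m \<Longrightarrow> tent H m j w \<le> H * indicator (cell m j) w"
  using tent_le tent_outside_cell by (cases "w \<in> cell m j") auto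

lemma tent_on_core:
  assumes "w \<in> cell_core m j" "1 \<le> m" "0 \<le> H"
  shows "H / 2 \<le> tent H m j w"
proof -
  have m: "0 < real m" using assms by simp
  from assms(1) m have "real j + 1/4 \<le> real m * w" "real m * w \<le> real j + 3/4"
    by (auto simp: cell_core_def field_simps)
  then have "real m * \<bar>w - (real j + 1/2) / real m\<bar> \<le> 1/4"
    unfolding abs_diff_scaled[OF m] by linarith
  then have "2 * H * (real m * \<bar>w - (real j + 1/2) / real m\<bar>) \<le> 2 * H * (1/4)"
    using assms(3) by (intro mult_left_mono) auto
  then have "H / 2 \<le> H - 2 * H * real m * \<bar>w - (real j + 1/2) / real m\<bar>"
    by (simp add: mult.assoc)
  then show ?thesis unfolding tent_def by (rule order.trans[OF _ max.cobounded2])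
qed

(* With s = 1/(2m) the half-width of a tent, H = M s^alpha: for |w - v| >= s the bound H suffices,
   below s the slope H/s does, since d/s <= (d/s)^alpha when d/s <= 1. *)
lemma tent_holder:
  assumes "0 < \<alpha>" "\<alpha> \<le> 1" "0 < M" "1 \<le> m"
  shows "\<bar>tent (tent_height \<alpha> M m) m j w - tent (tent_height \<alpha> M m) m j v\<bar> \<le> M * \<bar>w - v\<bar> powr \<alpha>"
proof -
  define H where "H = tent_height \<alpha> M m"
  define d where "d = \<bar>w - v\<bar>"
  define s where "s = 1 / (2 * real m)"
  have s: "0 < s" using assms by (simp add: s_def)
  have H: "H = M * s powr \<alpha>" "0 \<le> H" using assms by (simp_all add: H_def s_def tent_height_def)
  have bounded: "\<bar>tent H m j w - tent H m j v\<bar> \<le> H"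
    using tent_le[OF H(2), of m j w] tent_le[OF H(2), of m j v] tent_nonneg[of H m j w]
      tent_nonneg[of H m j v] by linarith
  have "\<bar>\<bar>w - (real j + 1/2) / real m\<bar> - \<bar>v - (real j + 1/2) / real m\<bar>\<bar> \<le> d"
    unfolding d_def by linarith
  then have "2 * H * real m * \<bar>\<bar>v - (real j + 1/2) / real m\<bar> - \<bar>w - (real j + 1/2) / real m\<bar>\<bar>
      \<le> 2 * H * real m * d"
    using H(2) by (intro mult_left_mono) (auto simp: abs_minus_commute)
  then have "\<bar>(H - 2 * H * real m * \<bar>w - (real j + 1/2) / real m\<bar>)
      - (H - 2 * H * real m * \<bar>v - (real j + 1/2) / real m\<bar>)\<bar> \<le> 2 * H * real m * d"
    using H(2) by (simp add: abs_mult right_diff_distrib[symmetric])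
  then have lipschitz: "\<bar>tent H m j w - tent H m j v\<bar> \<le> 2 * H * real m * d"
    unfolding tent_def by (rule order.trans[OF abs_max0_diff_le])
  show ?thesis
  proof (cases "s \<le> d")
    case True
    then have "H \<le> M * d powr \<alpha>"
      unfolding H using s assms by (intro mult_left_mono powr_mono2) auto
    then show ?thesis using bounded by (simp add: H_def d_def)
  next
    case False
    define x where "x = d / s"
    have x: "0 \<le> x" "x \<le> 1" using False s by (auto simp: x_def d_def)
    have "x \<le> x powr \<alpha>"
      using powr_mono'[of \<alpha> 1 x] x assms by simp
    have "2 * H * real m * d = M * s powr \<alpha> * x"
      using assms s by (simp add: H x_def s_def field_simps)
    also have "\<dots> \<le> M * s powr \<alpha> * x powr \<alpha>"
      using \<open>x \<le> x powr \<alpha>\<close> assms by (intro mult_left_mono) auto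
    also have "\<dots> = M * d powr \<alpha>"
      using s x by (simp add: x_def powr_mult[symmetric])
    finally show ?thesis using lipschitz by (simp add: H_def d_def)
  qed
qed

lemma hypercube_fun_pos: "0 < c \<Longrightarrow> 0 < hypercube_fun c H m \<sigma> w"
  by (simp add: hypercube_fun_def add_pos_nonneg sum_nonneg tent_nonneg)

lemma hypercube_fun_measurable [measurable]: "hypercube_fun c H m \<sigma> \<in> borel_measurable borel"
  unfolding hypercube_fun_def tent_def by measurable

lemma hypercube_fun_insert:
  "j \<notin> \<sigma> \<Longrightarrow> finite \<sigma> \<Longrightarrow> hypercube_fun c H m (insert j \<sigma>) w = hypercube_fun c H m \<sigma> w + tent H m j w"
  by (simp add: hypercube_fun_def)

lemma hypercube_fun_on_cell:
  assumes "w \<in> cell m j" "1 \<le> m" "0 \<le> H" "finite \<sigma>"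
  shows "hypercube_fun c H m \<sigma> w = c + (if j \<in> \<sigma> then tent H m j w else 0)"
proof -
  have "tent H m i w = 0" if "i \<in> \<sigma> - {j}" for i
    using that assms cells_disjoint tent_outside_cell by blast
  then have "(\<Sum>i\<in>\<sigma>. tent H m i w) = (\<Sum>i\<in>\<sigma> \<inter> {j}. tent H m i w)"
    using assms(4) by (intro sum.mono_neutral_right) auto
  moreover have "\<sigma> \<inter> {j} = (if j \<in> \<sigma> then {j} else {})" by auto
  ultimately show ?thesis by (simp add: hypercube_fun_def)
qed

lemma hypercube_fun_holder:
  assumes "0 < \<alpha>" "\<alpha> \<le> 1" "0 < M" "1 \<le> m" "0 < c" "finite \<sigma>"
  shows "hypercube_fun c (tent_height \<alpha> M m) m \<sigma> \<in> holder_class \<alpha> M"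
proof -
  define H where "H = tent_height \<alpha> M m"
  have H: "0 \<le> H" using assms by (simp add: H_def tent_height_def)
  let ?\<gamma> = "hypercube_fun c H m \<sigma>"
  have one_sided: "?\<gamma> w - ?\<gamma> v \<le> M * \<bar>w - v\<bar> powr \<alpha>" for w v
  proof (cases "\<exists>j\<in>\<sigma>. w \<in> cell m j")
    case True
    then obtain j where j: "j \<in> \<sigma>" "w \<in> cell m j" by blast
    have "tent H m j v \<le> (\<Sum>i\<in>\<sigma>. tent H m i v)"
      using assms j tent_nonneg by (intro member_le_sum) auto
    then have "?\<gamma> w - ?\<gamma> v \<le> tent H m j w - tent H m j v"
      using hypercube_fun_on_cell[OF j(2) assms(4) H assms(6)] j by (simp add: hypercube_fun_def)
    moreover have "\<bar>tent H m j w - tent H m j v\<bar> \<le> M * \<bar>w - v\<bar> powr \<alpha>"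
      using tent_holder[OF assms(1-4)] by (simp add: H_def)
    ultimately show ?thesis by linarith
  next
    case False
    then have "?\<gamma> w = c"
      using tent_outside_cell[OF _ assms(4) H] by (simp add: hypercube_fun_def)
    moreover have "c \<le> ?\<gamma> v" by (simp add: hypercube_fun_def sum_nonneg tent_nonneg)
    moreover have "0 \<le> M * \<bar>w - v\<bar> powr \<alpha>" using assms(3) by simp
    ultimately show ?thesis by linarith
  qed
  have "\<bar>?\<gamma> w - ?\<gamma> v\<bar> \<le> M * \<bar>w - v\<bar> powr \<alpha>" for w v
    using one_sided[of w v] one_sided[of v w] by (simp add: abs_le_iff abs_minus_commute)
  then show ?thesis
    unfolding holder_class_def H_def[symmetric] using hypercube_fun_pos[OF assms(5)] by blast
qed

section \<open>The law of the sample as a density\<close>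

definition obs_ref :: "(real \<times> nat) measure" where
  "obs_ref = lborel \<Otimes>\<^sub>M count_space UNIV"

definition sample_ref :: "nat \<Rightarrow> (nat \<Rightarrow> real \<times> nat) measure" where
  "sample_ref n = PiM {..<n} (\<lambda>_. obs_ref)"

definition obs_density :: "(real \<Rightarrow> real) \<Rightarrow> real \<times> nat \<Rightarrow> ennreal" where
  "obs_density \<gamma> = (\<lambda>(w, k). ennreal (indicator {0..1} w * poisson_mass (\<gamma> w) k))"

lemma sigma_finite_obs_ref: "sigma_finite_measure obs_ref"
proof -
  interpret C: sigma_finite_measure "count_space (UNIV::nat set)"
    by (rule sigma_finite_measure_count_space_countable) simp
  interpret P: pair_sigma_finite lborel "count_space (UNIV::nat set)" ..
  show ?thesis unfolding obs_ref_def by (rule P.sigma_finite_measure_axioms)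
qed

lemma sets_obs_ref: "sets obs_ref = sets (borel \<Otimes>\<^sub>M count_space UNIV)"
  unfolding obs_ref_def by (intro sets_pair_measure_cong) auto

lemma sets_sample_ref: "sets (sample_ref n) = sets (data_space n)"
  unfolding sample_ref_def data_space_def by (intro sets_PiM_cong refl sets_obs_ref)

lemma space_sample_ref: "space (sample_ref n) = space (data_space n)"
  using sets_sample_ref sets_eq_imp_space_eq by blast

lemma measurable_poisson_mixture:
  assumes [measurable]: "u \<in> borel_measurable borel" "r \<in> borel_measurable borel"
  shows "(\<lambda>(w, k). ennreal (u w * poisson_mass (r w) k)) \<in> borel_measurable obs_ref"
  unfolding poisson_mass_def obs_ref_def by measurable

lemma obs_density_measurable [measurable]:
  "\<gamma> \<in> borel_measurable borel \<Longrightarrow> obs_density \<gamma> \<in> borel_measurable obs_ref"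
  unfolding obs_density_def by (rule measurable_poisson_mixture) auto

lemma nn_integral_poisson_mixture:
  assumes [measurable]: "u \<in> borel_measurable borel" "r \<in> borel_measurable borel"
    and "\<And>w. 0 \<le> u w" "\<And>w. u w \<noteq> 0 \<Longrightarrow> 0 \<le> r w"
  shows "(\<integral>\<^sup>+y. (\<lambda>(w, k). ennreal (u w * poisson_mass (r w) k)) y \<partial>obs_ref)
    = (\<integral>\<^sup>+w. ennreal (u w) \<partial>lborel)"
proof -
  interpret C: sigma_finite_measure "count_space (UNIV::nat set)"
    by (rule sigma_finite_measure_count_space_countable) simp
  have "(\<integral>\<^sup>+y. (\<lambda>(w, k). ennreal (u w * poisson_mass (r w) k)) y \<partial>obs_ref)
      = (\<integral>\<^sup>+w. (\<integral>\<^sup>+k. ennreal (u w * poisson_mass (r w) k) \<partial>count_space UNIV) \<partial>lborel)"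
    unfolding obs_ref_def using measurable_poisson_mixture[OF assms(1,2)]
    by (subst C.nn_integral_fst[symmetric]) (auto simp: obs_ref_def)
  also have "\<dots> = (\<integral>\<^sup>+w. ennreal (u w) \<partial>lborel)"
  proof (rule nn_integral_cong)
    fix w
    have nonneg: "0 \<le> u w * poisson_mass (r w) k" for k
      using assms(3,4)[of w] by (cases "u w = 0") (auto intro!: mult_nonneg_nonneg poisson_mass_nonneg)
    have sums: "(\<lambda>k. u w * poisson_mass (r w) k) sums (u w * 1)"
      by (intro sums_mult poisson_mass_sums)
    have "(\<integral>\<^sup>+k. ennreal (u w * poisson_mass (r w) k) \<partial>count_space UNIV)
        = ennreal (\<Sum>k. u w * poisson_mass (r w) k)"
      unfolding nn_integral_count_space_nat using nonneg sums
      by (intro suminf_ennreal2) (auto simp: sums_iff)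
    then show "(\<integral>\<^sup>+k. ennreal (u w * poisson_mass (r w) k) \<partial>count_space UNIV) = ennreal (u w)"
      using sums_unique[OF sums] by simp
  qed
  finally show ?thesis .
qed

lemma obs_law_eq_density:
  assumes "\<forall>w\<in>{0..1}. 0 < \<gamma> w"
  shows "obs_law \<gamma> = density obs_ref (obs_density \<gamma>)"
proof -
  have "(\<lambda>(w, k). indicator {0..1} w * ennreal (pmf (poisson_pmf (\<gamma> w)) k)) = obs_density \<gamma>"
  proof (intro ext, clarify)
    fix w k
    show "indicator {0..1} w * ennreal (pmf (poisson_pmf (\<gamma> w)) k) = obs_density \<gamma> (w, k)"
      using assms by (cases "w \<in> {0..1}") (auto simp: obs_density_def poisson_mass_def)
  qed
  then show ?thesis unfolding obs_law_def obs_ref_def by simp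
qed

lemma prob_space_obs_density:
  assumes [measurable]: "\<gamma> \<in> borel_measurable borel" and "\<forall>w\<in>{0..1}. 0 < \<gamma> w"
  shows "prob_space (density obs_ref (obs_density \<gamma>))"
proof (rule prob_spaceI)
  have "emeasure (density obs_ref (obs_density \<gamma>)) (space obs_ref)
      = (\<integral>\<^sup>+y. obs_density \<gamma> y * indicator (space obs_ref) y \<partial>obs_ref)"
    by (rule emeasure_density) auto
  also have "\<dots> = (\<integral>\<^sup>+y. obs_density \<gamma> y \<partial>obs_ref)"
    by (rule nn_integral_cong) simp
  also have "\<dots> = (\<integral>\<^sup>+w. ennreal (indicator {0..1} (w::real)) \<partial>lborel)"
    unfolding obs_density_def
    by (rule nn_integral_poisson_mixture) (use assms(2) in \<open>auto simp: indicator_def less_imp_le\<close>)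
  also have "\<dots> = 1" by (simp add: ennreal_indicator)
  finally show "emeasure (density obs_ref (obs_density \<gamma>)) (space (density obs_ref (obs_density \<gamma>))) = 1"
    by simp
qed

lemma prod_indicator_ennreal:
  "finite I \<Longrightarrow> (\<Prod>i\<in>I. indicator (A i) (x i) :: ennreal) = indicator (Pi I A) x"
  by (induction I rule: finite_induct) (auto simp: indicator_def)

lemma PiM_density_prod:
  fixes N :: "'a measure" and f :: "'a \<Rightarrow> ennreal"
  assumes "sigma_finite_measure N" "sigma_finite_measure (density N f)"
    and [measurable]: "f \<in> borel_measurable N" and "finite I"
  shows "PiM I (\<lambda>_. density N f) = density (PiM I (\<lambda>_. N)) (\<lambda>x. \<Prod>i\<in>I. f (x i))"
proof -
  interpret D: product_sigma_finite "\<lambda>_. density N f"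
    using assms(2) by (simp add: product_sigma_finite_def)
  interpret P: product_sigma_finite "\<lambda>_. N"
    using assms(1) by (simp add: product_sigma_finite_def)
  have "density (PiM I (\<lambda>_. N)) (\<lambda>x. \<Prod>i\<in>I. f (x i)) = PiM I (\<lambda>_. density N f)"
  proof (rule D.PiM_eqI[OF assms(4)])
    show "sets (density (PiM I (\<lambda>_. N)) (\<lambda>x. \<Prod>i\<in>I. f (x i))) = sets (PiM I (\<lambda>_. density N f))"
      unfolding sets_density by (intro sets_PiM_cong) auto
  next
    fix A assume "\<And>i. i \<in> I \<Longrightarrow> A i \<in> sets (density N f)"
    then have A: "\<And>i. i \<in> I \<Longrightarrow> A i \<in> sets N" by simp
    have "emeasure (density (PiM I (\<lambda>_. N)) (\<lambda>x. \<Prod>i\<in>I. f (x i))) (PiE I A)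
        = (\<integral>\<^sup>+x. (\<Prod>i\<in>I. f (x i)) * indicator (PiE I A) x \<partial>PiM I (\<lambda>_. N))"
      using A by (intro emeasure_density) (auto intro!: sets_PiM_I_finite assms(4))
    also have "\<dots> = (\<integral>\<^sup>+x. (\<Prod>i\<in>I. f (x i) * indicator (A i) (x i)) \<partial>PiM I (\<lambda>_. N))"
    proof (rule nn_integral_cong)
      fix x assume "x \<in> space (PiM I (\<lambda>_. N))"
      then have "x \<in> extensional I" by (auto simp: space_PiM PiE_def)
      then have "indicator (PiE I A) x = (indicator (Pi I A) x :: ennreal)"
        by (auto simp: indicator_def PiE_def)
      then have "indicator (PiE I A) x = (\<Prod>i\<in>I. indicator (A i) (x i) :: ennreal)"
        using assms(4) by (simp add: prod_indicator_ennreal)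
      then show "(\<Prod>i\<in>I. f (x i)) * indicator (PiE I A) x = (\<Prod>i\<in>I. f (x i) * indicator (A i) (x i))"
        by (simp add: prod.distrib)
    qed
    also have "\<dots> = (\<Prod>i\<in>I. \<integral>\<^sup>+y. f y * indicator (A i) y \<partial>N)"
      using A by (intro P.product_nn_integral_prod assms(4)) auto
    also have "\<dots> = (\<Prod>i\<in>I. emeasure (density N f) (A i))"
      using A by (intro prod.cong refl) (simp add: emeasure_density)
    finally show "emeasure (density (PiM I (\<lambda>_. N)) (\<lambda>x. \<Prod>i\<in>I. f (x i))) (PiE I A)
        = (\<Prod>i\<in>I. emeasure (density N f) (A i))" .
  qed
  then show ?thesis by simp
qed

lemma PiM_obs_law:
  assumes [measurable]: "\<gamma> \<in> borel_measurable borel" and "\<forall>w\<in>{0..1}. 0 < \<gamma> w"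
  shows "PiM {..<n} (\<lambda>_. obs_law \<gamma>) = density (sample_ref n) (\<lambda>x. \<Prod>i<n. obs_density \<gamma> (x i))"
proof -
  interpret prob_space "density obs_ref (obs_density \<gamma>)"
    by (rule prob_space_obs_density[OF assms])
  show ?thesis unfolding obs_law_eq_density[OF assms(2)] sample_ref_def
    by (rule PiM_density_prod[OF sigma_finite_obs_ref]) (auto intro: sigma_finite_measure_axioms)
qed

definition cell_loss :: "nat \<Rightarrow> nat \<Rightarrow> (real \<Rightarrow> real) \<Rightarrow> (real \<Rightarrow> real) \<Rightarrow> ennreal" where
  "cell_loss m j \<gamma> e = (\<integral>\<^sup>+w. ennreal (poisson_hellinger (\<gamma> w) (e w)) * indicator (cell m j) w \<partial>lborel)"

lemma sum_indicator_cells_le: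
  assumes "1 \<le> m"
  shows "(\<Sum>j<m. indicator (cell m j) w :: ennreal) \<le> indicator {0..1} w"
proof (cases "\<exists>j<m. w \<in> cell m j")
  case True
  then obtain j where j: "j < m" "w \<in> cell m j" by auto
  have "(\<Sum>i\<in>{..<m} - {j}. indicator (cell m i) w :: ennreal) = 0"
    using cells_disjoint[OF assms _ j(2)] by (intro sum.neutral) (auto simp: indicator_def)
  then have "(\<Sum>i<m. indicator (cell m i) w :: ennreal) = indicator (cell m j) w"
    using j by (simp add: sum.remove)
  then show ?thesis using j cell_subset_unit[OF assms j(1)] by (auto simp: indicator_def)
next
  case False
  then have "(\<Sum>i<m. indicator (cell m i) w :: ennreal) = 0"
    by (intro sum.neutral) (auto simp: indicator_def)
  then show ?thesis by simp
qed

lemma sum_cell_loss_le_poisson_loss: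
  assumes [measurable]: "\<gamma> \<in> borel_measurable borel" "e \<in> borel_measurable borel"
    and "\<forall>w\<in>{0..1}. 0 < \<gamma> w \<and> 0 < e w" "1 \<le> m"
  shows "(\<Sum>j<m. cell_loss m j \<gamma> e) \<le> poisson_loss \<gamma> e"
proof -
  have "poisson_loss \<gamma> e = (\<integral>\<^sup>+w. ennreal (poisson_hellinger (\<gamma> w) (e w)) \<partial>PW)"
    unfolding poisson_loss_def PW_def using assms(3)
    by (intro nn_integral_cong_AE AE_uniform_measureI AE_I2) (auto simp: hellinger_sq_poisson_pmf)
  also have "\<dots> = (\<integral>\<^sup>+w. ennreal (poisson_hellinger (\<gamma> w) (e w)) * indicator {0..1} w \<partial>lborel)"
    unfolding PW_def
    by (subst nn_integral_uniform_measure) (auto simp: poisson_hellinger_def divide_ennreal_def)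
  finally have loss: "poisson_loss \<gamma> e
      = (\<integral>\<^sup>+w. ennreal (poisson_hellinger (\<gamma> w) (e w)) * indicator {0..1} w \<partial>lborel)" .
  have "(\<Sum>j<m. cell_loss m j \<gamma> e)
      = (\<integral>\<^sup>+w. ennreal (poisson_hellinger (\<gamma> w) (e w)) * (\<Sum>j<m. indicator (cell m j) w) \<partial>lborel)"
    unfolding cell_loss_def sum_distrib_left
    by (rule nn_integral_sum[symmetric]) (auto simp: poisson_hellinger_def)
  also have "\<dots> \<le> poisson_loss \<gamma> e"
    unfolding loss by (intro nn_integral_mono mult_left_mono sum_indicator_cells_le assms(4)) auto
  finally show ?thesis .
qed

lemma poisson_hellinger_pair_on_core:
  assumes "w \<in> cell_core m j" "1 \<le> m" "j \<notin> \<sigma>" "finite \<sigma>" "0 < H" "0 \<le> e"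
  shows "(1 - exp (-(H/8))) / 2
    \<le> poisson_hellinger (hypercube_fun (H/16) H m \<sigma> w) e
      + poisson_hellinger (hypercube_fun (H/16) H m (insert j \<sigma>) w) e"
proof -
  have cell: "w \<in> cell m j" using assms(1) cell_core_subset_cell[OF assms(2)] by auto
  have \<gamma>: "hypercube_fun (H/16) H m \<sigma> w = H/16"
    "hypercube_fun (H/16) H m (insert j \<sigma>) w = H/16 + tent H m j w"
    using hypercube_fun_on_cell[OF cell assms(2)] assms(3-5) by auto
  have "1 - exp (-(H/8)) \<le> poisson_hellinger (H/16) (H/16 + tent H m j w)"
    using tent_on_core[OF assms(1,2)] assms(5) by (intro poisson_hellinger_tent) auto
  also have "\<dots> \<le> 2 * (poisson_hellinger (H/16) e + poisson_hellinger (H/16 + tent H m j w) e)"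
    using assms(5,6) tent_nonneg[of H m j w] by (intro poisson_hellinger_quasi_triangle) auto
  finally show ?thesis unfolding \<gamma> by simp
qed

lemma cell_loss_pair_ge:
  assumes [measurable]: "e \<in> borel_measurable borel" and "\<forall>w\<in>{0..1}. 0 < e w"
    and "1 \<le> m" "j < m" "j \<notin> \<sigma>" "finite \<sigma>" "0 < H"
  shows "ennreal ((1 - exp (-(H/8))) / (4 * real m))
    \<le> cell_loss m j (hypercube_fun (H/16) H m \<sigma>) e + cell_loss m j (hypercube_fun (H/16) H m (insert j \<sigma>)) e"
proof -
  let ?\<gamma> = "hypercube_fun (H/16) H m \<sigma>" and ?\<gamma>' = "hypercube_fun (H/16) H m (insert j \<sigma>)"
  define q where "q = (1 - exp (-(H/8))) / 2"
  have q: "0 \<le> q" using assms by (simp add: q_def)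
  have core: "q \<le> poisson_hellinger (?\<gamma> w) (e w) + poisson_hellinger (?\<gamma>' w) (e w)"
    if "w \<in> cell_core m j" for w
  proof -
    have "w \<in> {0..1}"
      using that cell_core_subset_cell[OF assms(3), of j] cell_subset_unit[OF assms(3,4)] by blast
    then show ?thesis
      unfolding q_def using assms(2)
      by (intro poisson_hellinger_pair_on_core that assms(3,5,6,7)) (auto simp: less_imp_le)
  qed
  have "(\<integral>\<^sup>+w. ennreal q * indicator (cell_core m j) w \<partial>lborel) = ennreal q * ennreal (1 / (2 * real m))"
    using assms(3) by (simp add: nn_integral_cmult_indicator emeasure_cell_core)
  also have "\<dots> = ennreal ((1 - exp (-(H/8))) / (4 * real m))"
    using q by (simp add: q_def ennreal_mult[symmetric])
  finally have "ennreal ((1 - exp (-(H/8))) / (4 * real m))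
      = (\<integral>\<^sup>+w. ennreal q * indicator (cell_core m j) w \<partial>lborel)" ..
  also have "\<dots> \<le> (\<integral>\<^sup>+w. ennreal (poisson_hellinger (?\<gamma> w) (e w)) * indicator (cell m j) w
      + ennreal (poisson_hellinger (?\<gamma>' w) (e w)) * indicator (cell m j) w \<partial>lborel)"
  proof (rule nn_integral_mono)
    fix w
    show "ennreal q * indicator (cell_core m j) w \<le> ennreal (poisson_hellinger (?\<gamma> w) (e w)) * indicator (cell m j) w
        + ennreal (poisson_hellinger (?\<gamma>' w) (e w)) * indicator (cell m j) w"
    proof (cases "w \<in> cell_core m j")
      case True
      then have "w \<in> cell m j" using cell_core_subset_cell[OF assms(3)] by auto
      moreover have "ennreal q \<le> ennreal (poisson_hellinger (?\<gamma> w) (e w)) + ennreal (poisson_hellinger (?\<gamma>' w) (e w))"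
        using core[OF True] by (simp add: ennreal_plus[symmetric] poisson_hellinger_nonneg del: ennreal_plus)
      ultimately show ?thesis using True by simp
    qed simp
  qed
  also have "\<dots> = cell_loss m j ?\<gamma> e + cell_loss m j ?\<gamma>' e"
    unfolding cell_loss_def by (rule nn_integral_add) (auto simp: poisson_hellinger_def)
  finally show ?thesis .
qed

lemma estimator_measurable:
  assumes "est \<in> estimators n"
  shows "(\<lambda>p. est (fst p) (snd p)) \<in> borel_measurable (sample_ref n \<Otimes>\<^sub>M lborel)"
proof -
  have sets: "sets (sample_ref n \<Otimes>\<^sub>M lborel) = sets (data_space n \<Otimes>\<^sub>M borel)"
    by (intro sets_pair_measure_cong sets_sample_ref) simp
  have "(\<lambda>p. est (fst p) (snd p)) = (\<lambda>(x, w). est x w)" by auto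
  then show ?thesis
    unfolding measurable_cong_sets[OF sets refl] using assms by (simp add: estimators_def)
qed

lemma estimator_section_measurable:
  assumes "est \<in> estimators n" "x \<in> space (data_space n)"
  shows "est x \<in> borel_measurable borel"
proof -
  have "(\<lambda>(x, w). est x w) \<in> borel_measurable (data_space n \<Otimes>\<^sub>M borel)"
    using assms(1) by (simp add: estimators_def)
  from measurable_compose_Pair1[OF assms(2) this] show ?thesis by simp
qed

lemma cell_loss_estimator_measurable:
  assumes "est \<in> estimators n" and [measurable]: "\<gamma> \<in> borel_measurable borel"
  shows "(\<lambda>x. cell_loss m j \<gamma> (est x)) \<in> borel_measurable (sample_ref n)"
proof -
  note [measurable] = estimator_measurable[OF assms(1)]
  have "(\<lambda>p. ennreal (poisson_hellinger (\<gamma> (snd p)) (est (fst p) (snd p))) * indicator (cell m j) (snd p))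
      \<in> borel_measurable (sample_ref n \<Otimes>\<^sub>M lborel)"
    unfolding poisson_hellinger_def by measurable
  then show ?thesis
    unfolding cell_loss_def by (intro lborel.borel_measurable_nn_integral) (simp add: case_prod_beta')
qed

definition overlap_density :: "real \<Rightarrow> nat \<Rightarrow> nat \<Rightarrow> (real \<Rightarrow> real) \<Rightarrow> real \<times> nat \<Rightarrow> ennreal" where
  "overlap_density H m j \<gamma> = (\<lambda>(w, k).
     ennreal (indicator {0..1} w * exp (-(H * indicator (cell m j) w)) * poisson_mass (\<gamma> w) k))"

lemma overlap_density_le:
  assumes "\<And>w. 0 \<le> \<gamma> w" "\<And>w. \<gamma> w \<le> \<gamma>' w"
    and "\<And>w. \<gamma>' w \<le> \<gamma> w + H * indicator (cell m j) w"
  shows "overlap_density H m j \<gamma> y \<le> obs_density \<gamma>' y"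
proof -
  obtain w k where y: "y = (w, k)" by (cases y)
  have "exp (-(H * indicator (cell m j) w)) \<le> exp (-(\<gamma>' w - \<gamma> w))"
    using assms(3)[of w] by simp
  then have "exp (-(H * indicator (cell m j) w)) * poisson_mass (\<gamma> w) k
      \<le> exp (-(\<gamma>' w - \<gamma> w)) * poisson_mass (\<gamma> w) k"
    using poisson_mass_nonneg[OF assms(1)] by (rule mult_right_mono)
  also have "\<dots> \<le> poisson_mass (\<gamma>' w) k"
    using assms(1,2) by (rule poisson_mass_rate_mono)
  finally show ?thesis
    unfolding y overlap_density_def obs_density_def
    by (cases "w \<in> {0..1}") (simp_all add: ennreal_leI)
qed

lemma nn_integral_overlap_density_ge:
  assumes "1 \<le> m" "j < m" "0 < H" and [measurable]: "\<gamma> \<in> borel_measurable borel"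
    and "\<And>w. 0 \<le> \<gamma> w"
  shows "ennreal (1 - H / real m) \<le> (\<integral>\<^sup>+y. overlap_density H m j \<gamma> y \<partial>obs_ref)"
proof -
  define u where "u w = indicator {0..1} w * exp (-(H * indicator (cell m j) w))" for w :: real
  have [measurable]: "u \<in> borel_measurable borel" unfolding u_def by measurable
  have mixture: "(\<integral>\<^sup>+y. overlap_density H m j \<gamma> y \<partial>obs_ref) = (\<integral>\<^sup>+w. ennreal (u w) \<partial>lborel)"
    unfolding overlap_density_def u_def[symmetric]
    by (rule nn_integral_poisson_mixture) (auto simp: u_def assms(5))
  define \<beta> where "\<beta> = (1 - exp (-H)) / real m"
  have \<beta>: "0 \<le> \<beta>" "\<beta> \<le> H / real m" "\<beta> \<le> 1"
  proof -
    have "1 \<le> real m" "0 < exp (-H)" "exp (-H) \<le> 1" "1 - H \<le> exp (-H)"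
      using assms(1,3) exp_ge_add_one_self[of "-H"] by simp_all
    then have "0 \<le> 1 - exp (-H)" "1 - exp (-H) \<le> H" "1 - exp (-H) \<le> 1 * real m"
      by linarith+
    then show "0 \<le> \<beta>" "\<beta> \<le> H / real m" "\<beta> \<le> 1"
      using assms(1) by (auto simp: \<beta>_def divide_right_mono pos_divide_le_eq)
  qed
  have split: "ennreal (u w) + ennreal (1 - exp (-H)) * indicator (cell m j) w = indicator {0..1} w" for w
  proof (cases "w \<in> cell m j")
    case True
    then have "w \<in> {0..1}" using cell_subset_unit[OF assms(1,2)] by auto
    then show ?thesis using True assms(3) by (simp add: u_def ennreal_plus[symmetric] del: ennreal_plus)
  qed (simp add: u_def indicator_def)
  have "(\<integral>\<^sup>+w. ennreal (u w) \<partial>lborel) + ennreal \<beta>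
      = (\<integral>\<^sup>+w. ennreal (u w) + ennreal (1 - exp (-H)) * indicator (cell m j) w \<partial>lborel)"
    using assms(1,3)
    by (subst nn_integral_add) (auto simp: nn_integral_cmult_indicator emeasure_cell \<beta>_def ennreal_mult[symmetric])
  also have "\<dots> = 1"
    unfolding split by simp
  also have "\<dots> = ennreal (1 - \<beta>) + ennreal \<beta>"
    using \<beta> by (simp add: ennreal_plus[symmetric] del: ennreal_plus)
  finally have "(\<integral>\<^sup>+w. ennreal (u w) \<partial>lborel) = ennreal (1 - \<beta>)"
    using ennreal_add_left_cancel[of "ennreal \<beta>"] by (simp add: add.commute)
  moreover have "ennreal (1 - H / real m) \<le> ennreal (1 - \<beta>)"
    using \<beta> by (intro ennreal_leI) simp
  ultimately show ?thesis unfolding mixture by simp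
qed

lemma nn_integral_PiM_prod_ge_half:
  assumes "sigma_finite_measure N" and [measurable]: "g \<in> borel_measurable N"
    and "ennreal (1 - \<delta>) \<le> (\<integral>\<^sup>+y. g y \<partial>N)" "\<delta> \<le> 1" "real n * \<delta> \<le> 1/2"
  shows "ennreal (1/2) \<le> (\<integral>\<^sup>+x. (\<Prod>i<n. g (x i)) \<partial>PiM {..<n} (\<lambda>_. N))"
proof -
  interpret product_sigma_finite "\<lambda>_. N"
    using assms(1) by (simp add: product_sigma_finite_def)
  have "1 - real n * \<delta> \<le> (1 - \<delta>) ^ n"
    using Bernoulli_inequality[of "-\<delta>" n] assms(4) by simp
  then have "1/2 \<le> (1 - \<delta>) ^ n"
    using assms(5) by linarith
  then have "ennreal (1/2) \<le> ennreal (1 - \<delta>) ^ n"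
    using assms(4) by (simp add: ennreal_power ennreal_leI del: ennreal_half)
  also have "\<dots> \<le> (\<integral>\<^sup>+y. g y \<partial>N) ^ n"
    by (intro power_mono assms(3)) simp
  also have "\<dots> = (\<integral>\<^sup>+x. (\<Prod>i<n. g (x i)) \<partial>PiM {..<n} (\<lambda>_. N))"
    by (subst product_nn_integral_prod) auto
  finally show ?thesis .
qed

lemma nn_integral_two_point_ge:
  assumes [measurable]: "g \<in> borel_measurable N" "f \<in> borel_measurable N" "f' \<in> borel_measurable N"
      "L \<in> borel_measurable N" "L' \<in> borel_measurable N"
    and "\<And>x. x \<in> space N \<Longrightarrow> g x \<le> f x" "\<And>x. x \<in> space N \<Longrightarrow> g x \<le> f' x"
    and "\<And>x. x \<in> space N \<Longrightarrow> K \<le> L x + L' x"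
  shows "K * (\<integral>\<^sup>+x. g x \<partial>N) \<le> (\<integral>\<^sup>+x. f x * L x \<partial>N) + (\<integral>\<^sup>+x. f' x * L' x \<partial>N)"
proof -
  have "K * (\<integral>\<^sup>+x. g x \<partial>N) = (\<integral>\<^sup>+x. K * g x \<partial>N)"
    by (rule nn_integral_cmult[symmetric]) simp
  also have "\<dots> \<le> (\<integral>\<^sup>+x. f x * L x + f' x * L' x \<partial>N)"
  proof (rule nn_integral_mono)
    fix x assume x: "x \<in> space N"
    have "K * g x \<le> (L x + L' x) * g x"
      using assms(8)[OF x] by (rule mult_right_mono) simp
    also have "\<dots> = g x * L x + g x * L' x" by (simp add: algebra_simps)
    also have "\<dots> \<le> f x * L x + f' x * L' x"
      using assms(6,7)[OF x] by (intro add_mono mult_right_mono) auto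
    finally show "K * g x \<le> f x * L x + f' x * L' x" .
  qed
  also have "\<dots> = (\<integral>\<^sup>+x. f x * L x \<partial>N) + (\<integral>\<^sup>+x. f' x * L' x \<partial>N)"
    by (rule nn_integral_add) auto
  finally show ?thesis .
qed

lemma overlap_density_measurable [measurable]:
  assumes [measurable]: "\<gamma> \<in> borel_measurable borel"
  shows "overlap_density H m j \<gamma> \<in> borel_measurable obs_ref"
  unfolding overlap_density_def by (rule measurable_poisson_mixture; measurable)

lemma nn_integral_overlap_product_ge_half:
  assumes "1 \<le> n" "1 \<le> m" "j < m" "0 < H" and [measurable]: "\<gamma> \<in> borel_measurable borel"
    and "\<And>w. 0 \<le> \<gamma> w" "real n * H / real m \<le> 1/2"
  shows "ennreal (1/2) \<le> (\<integral>\<^sup>+x. (\<Prod>i<n. overlap_density H m j \<gamma> (x i)) \<partial>sample_ref n)"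
proof -
  have "real 1 * (H / real m) \<le> real n * (H / real m)"
    using assms(1,2,4) by (intro mult_right_mono) auto
  then have "H / real m \<le> real n * H / real m" by simp
  then have "H / real m \<le> 1" using assms(7) by linarith
  from nn_integral_PiM_prod_ge_half[OF sigma_finite_obs_ref overlap_density_measurable[OF assms(5)]
      nn_integral_overlap_density_ge[OF assms(2-6)] this]
  show ?thesis using assms(7) unfolding sample_ref_def by simp
qed

lemma prod_mono_ennreal: "(\<And>i. i \<in> I \<Longrightarrow> f i \<le> g i) \<Longrightarrow> (\<Prod>i\<in>I. f i :: ennreal) \<le> (\<Prod>i\<in>I. g i)"
  by (induction I rule: infinite_finite_induct) (auto intro!: mult_mono)

definition cell_risk ::
    "nat \<Rightarrow> nat \<Rightarrow> nat \<Rightarrow> (real \<Rightarrow> real) \<Rightarrow> ((nat \<Rightarrow> real \<times> nat) \<Rightarrow> real \<Rightarrow> real) \<Rightarrow> ennreal" where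
  "cell_risk n m j \<gamma> est = (\<integral>\<^sup>+x. (\<Prod>i<n. obs_density \<gamma> (x i)) * cell_loss m j \<gamma> (est x) \<partial>sample_ref n)"

lemma sum_cell_risk_le_risk:
  assumes "est \<in> estimators n" and [measurable]: "\<gamma> \<in> borel_measurable borel"
    and "\<forall>w\<in>{0..1}. 0 < \<gamma> w" "1 \<le> m"
  shows "(\<Sum>j<m. cell_risk n m j \<gamma> est) \<le> risk n \<gamma> est"
proof -
  let ?F = "\<lambda>x. \<Prod>i<n. obs_density \<gamma> (x i)"
  have F: "?F \<in> borel_measurable (sample_ref n)" unfolding sample_ref_def by measurable
  have L: "(\<lambda>x. cell_loss m j \<gamma> (est x)) \<in> borel_measurable (sample_ref n)" for j
    by (rule cell_loss_estimator_measurable[OF assms(1,2)])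
  have "(\<Sum>j<m. cell_risk n m j \<gamma> est) = (\<integral>\<^sup>+x. ?F x * (\<Sum>j<m. cell_loss m j \<gamma> (est x)) \<partial>sample_ref n)"
    unfolding cell_risk_def sum_distrib_left
    by (rule nn_integral_sum[symmetric]) (auto intro!: borel_measurable_times_ennreal F L)
  also have "\<dots> = (\<integral>\<^sup>+x. (\<Sum>j<m. cell_loss m j \<gamma> (est x)) \<partial>density (sample_ref n) ?F)"
    by (rule nn_integral_density[symmetric]) (auto intro!: F L borel_measurable_sum)
  also have "\<dots> \<le> (\<integral>\<^sup>+x. poisson_loss \<gamma> (est x) \<partial>density (sample_ref n) ?F)"
  proof (rule nn_integral_mono)
    fix x assume "x \<in> space (density (sample_ref n) ?F)"
    then have x: "x \<in> space (data_space n)" by (simp add: space_sample_ref)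
    show "(\<Sum>j<m. cell_loss m j \<gamma> (est x)) \<le> poisson_loss \<gamma> (est x)"
      using assms(1,3) x
      by (intro sum_cell_loss_le_poisson_loss assms(2,4) estimator_section_measurable[OF assms(1) x])
         (auto simp: estimators_def)
  qed
  also have "\<dots> = risk n \<gamma> est"
    unfolding risk_def PiM_obs_law[OF assms(2,3)] ..
  finally show ?thesis .
qed

lemma cell_risk_pair_ge:
  assumes "est \<in> estimators n" "1 \<le> n" "1 \<le> m" "j < m" "j \<notin> \<sigma>" "finite \<sigma>" "0 < H"
    and "real n * H / real m \<le> 1/2"
  shows "ennreal ((1 - exp (-(H/8))) / (8 * real m))
    \<le> cell_risk n m j (hypercube_fun (H/16) H m \<sigma>) est
     + cell_risk n m j (hypercube_fun (H/16) H m (insert j \<sigma>)) est"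
proof -
  let ?\<gamma> = "hypercube_fun (H/16) H m \<sigma>" and ?\<gamma>' = "hypercube_fun (H/16) H m (insert j \<sigma>)"
  let ?g = "overlap_density H m j ?\<gamma>"
  define K where "K = ennreal ((1 - exp (-(H/8))) / (4 * real m))"
  have \<gamma>_nonneg: "0 \<le> ?\<gamma> w" for w
    using hypercube_fun_pos[of "H/16"] assms(7) by (simp add: less_imp_le)
  have \<gamma>'_le: "?\<gamma>' w \<le> ?\<gamma> w + H * indicator (cell m j) w" for w
    using hypercube_fun_insert[OF assms(5,6)] tent_le_indicator[of H m j w] assms(3,7) by simp
  have below: "?g y \<le> obs_density ?\<gamma> y" "?g y \<le> obs_density ?\<gamma>' y" for y
    using assms(5,6,7) \<gamma>_nonneg \<gamma>'_le
    by (auto intro!: overlap_density_le simp: hypercube_fun_insert tent_nonneg)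
  have overlap: "ennreal (1/2) \<le> (\<integral>\<^sup>+x. (\<Prod>i<n. ?g (x i)) \<partial>sample_ref n)"
    by (rule nn_integral_overlap_product_ge_half[OF assms(2,3,4,7) hypercube_fun_measurable
          \<gamma>_nonneg assms(8)])
  have "ennreal ((1 - exp (-(H/8))) / (8 * real m)) = K * ennreal (1/2)"
    using assms(7) by (simp add: K_def ennreal_mult[symmetric] del: ennreal_half)
  also have "\<dots> \<le> K * (\<integral>\<^sup>+x. (\<Prod>i<n. ?g (x i)) \<partial>sample_ref n)"
    by (rule mult_left_mono[OF overlap]) simp
  also have "\<dots> \<le> cell_risk n m j ?\<gamma> est + cell_risk n m j ?\<gamma>' est"
    unfolding cell_risk_def
  proof (rule nn_integral_two_point_ge)
    fix x assume "x \<in> space (sample_ref n)"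
    then have x: "x \<in> space (data_space n)" by (simp add: space_sample_ref)
    show "K \<le> cell_loss m j ?\<gamma> (est x) + cell_loss m j ?\<gamma>' (est x)"
      unfolding K_def using assms(1) x
      by (intro cell_loss_pair_ge estimator_section_measurable[OF assms(1) x] assms(3-7))
         (auto simp: estimators_def)
    show "(\<Prod>i<n. ?g (x i)) \<le> (\<Prod>i<n. obs_density ?\<gamma> (x i))"
      by (intro prod_mono_ennreal below)
    show "(\<Prod>i<n. ?g (x i)) \<le> (\<Prod>i<n. obs_density ?\<gamma>' (x i))"
      by (intro prod_mono_ennreal below)
  qed (unfold sample_ref_def, measurable,
       auto intro!: cell_loss_estimator_measurable[OF assms(1), unfolded sample_ref_def])
  finally show ?thesis .
qed

section \<open>Assouad's lemma\<close>

lemma sum_Pow_insert_split: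
  fixes f :: "'a set \<Rightarrow> 'b::comm_monoid_add"
  assumes "j \<in> S" "finite S"
  shows "(\<Sum>\<sigma>\<in>Pow S. f \<sigma>) = (\<Sum>\<sigma>\<in>Pow (S - {j}). f \<sigma> + f (insert j \<sigma>))"
proof -
  have "Pow S = Pow (S - {j}) \<union> insert j ` Pow (S - {j})"
    using assms(1) Pow_insert[of j "S - {j}"] by (simp add: insert_absorb)
  moreover have "Pow (S - {j}) \<inter> insert j ` Pow (S - {j}) = {}" by auto
  moreover have "inj_on (insert j) (Pow (S - {j}))" by (auto simp: inj_on_def)
  ultimately show ?thesis
    using assms(2) by (simp add: sum.union_disjoint sum.reindex sum.distrib)
qed

lemma assouad_hypercube:
  fixes f :: "'a set \<Rightarrow> 'a \<Rightarrow> ennreal"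
  assumes "finite S"
    and pair: "\<And>j \<sigma>. j \<in> S \<Longrightarrow> \<sigma> \<subseteq> S - {j} \<Longrightarrow> K \<le> f \<sigma> j + f (insert j \<sigma>) j"
    and bound: "\<And>\<sigma>. \<sigma> \<subseteq> S \<Longrightarrow> (\<Sum>j\<in>S. f \<sigma> j) \<le> B"
  shows "of_nat (card S) * K \<le> 2 * B"
proof (cases "S = {}")
  case False
  define c :: ennreal where "c = of_nat (2 ^ (card S - 1))"
  have "c * (of_nat (card S) * K) = (\<Sum>j\<in>S. \<Sum>\<sigma>\<in>Pow (S - {j}). K)"
    using assms(1) by (simp add: c_def card_Pow card_Diff_singleton mult.left_commute)
  also have "\<dots> \<le> (\<Sum>j\<in>S. \<Sum>\<sigma>\<in>Pow (S - {j}). f \<sigma> j + f (insert j \<sigma>) j)"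
    by (intro sum_mono pair) auto
  also have "\<dots> = (\<Sum>j\<in>S. \<Sum>\<sigma>\<in>Pow S. f \<sigma> j)"
    using assms(1) by (intro sum.cong refl sum_Pow_insert_split[symmetric])
  also have "\<dots> = (\<Sum>\<sigma>\<in>Pow S. \<Sum>j\<in>S. f \<sigma> j)"
    by (rule sum.swap)
  also have "\<dots> \<le> (\<Sum>\<sigma>\<in>Pow S. B)"
    by (intro sum_mono bound) auto
  also have "\<dots> = c * (2 * B)"
  proof -
    have "card S = Suc (card S - 1)" using False assms(1) by (simp add: card_gt_0_iff)
    then have "(2::nat) ^ card S = 2 * 2 ^ (card S - 1)" by (metis power_Suc)
    then show ?thesis using assms(1) by (simp add: c_def card_Pow mult.assoc mult.left_commute)
  qed
  finally show ?thesis
    by (simp add: c_def ennreal_mult_le_mult_iff ennreal_of_nat_neq_top del: of_nat_power)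
qed simp

lemma sup_risk_ge_tent_height:
  assumes "est \<in> estimators n" "0 < \<alpha>" "\<alpha> \<le> 1" "0 < M" "1 \<le> m" "1 \<le> n"
    and "real n * tent_height \<alpha> M m / real m \<le> 1/2"
  shows "ennreal ((1 - exp (-(tent_height \<alpha> M m / 8))) / 16) \<le> (\<Squnion>\<gamma>\<in>holder_class \<alpha> M. risk n \<gamma> est)"
proof -
  define H where "H = tent_height \<alpha> M m"
  have H: "0 < H" using assms(4,5) by (simp add: H_def tent_height_def)
  let ?\<gamma> = "\<lambda>\<sigma>. hypercube_fun (H/16) H m \<sigma>"
  let ?B = "\<Squnion>\<gamma>\<in>holder_class \<alpha> M. risk n \<gamma> est"
  have "of_nat (card {..<m}) * ennreal ((1 - exp (-(H/8))) / (8 * real m)) \<le> 2 * ?B"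
  proof (rule assouad_hypercube[where f = "\<lambda>\<sigma> j. cell_risk n m j (?\<gamma> \<sigma>) est"])
    fix j \<sigma> assume "j \<in> {..<m}" "\<sigma> \<subseteq> {..<m} - {j}"
    then show "ennreal ((1 - exp (-(H/8))) / (8 * real m))
        \<le> cell_risk n m j (?\<gamma> \<sigma>) est + cell_risk n m j (?\<gamma> (insert j \<sigma>)) est"
      using assms(7) unfolding H_def[symmetric]
      by (intro cell_risk_pair_ge assms(1,5,6) H) (auto intro: finite_subset)
  next
    fix \<sigma> assume "\<sigma> \<subseteq> {..<m}"
    then have "finite \<sigma>" by (rule finite_subset) simp
    have "(\<Sum>j\<in>{..<m}. cell_risk n m j (?\<gamma> \<sigma>) est) \<le> risk n (?\<gamma> \<sigma>) est"
      using H by (intro sum_cell_risk_le_risk assms(1,5) hypercube_fun_measurable ballI hypercube_fun_pos)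
        auto
    also have "\<dots> \<le> ?B"
      using hypercube_fun_holder[OF assms(2-5), of "H/16" \<sigma>] H \<open>finite \<sigma>\<close>
      unfolding H_def[symmetric] by (intro SUP_upper) auto
    finally show "(\<Sum>j\<in>{..<m}. cell_risk n m j (?\<gamma> \<sigma>) est) \<le> ?B" .
  qed simp
  also have "of_nat (card {..<m}) * ennreal ((1 - exp (-(H/8))) / (8 * real m))
      = 2 * ennreal ((1 - exp (-(H/8))) / 16)"
  proof -
    have "0 \<le> 1 - exp (-(H/8))" using H by simp
    then have "of_nat (card {..<m}) * ennreal ((1 - exp (-(H/8))) / (8 * real m))
        = ennreal (real m * ((1 - exp (-(H/8))) / (8 * real m)))"
      by (subst ennreal_mult) (auto simp: ennreal_of_nat_eq_real_of_nat)
    also have "real m * ((1 - exp (-(H/8))) / (8 * real m)) = 2 * ((1 - exp (-(H/8))) / 16)"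
      using assms(5) by (simp add: field_simps)
    also have "ennreal (2 * ((1 - exp (-(H/8))) / 16)) = 2 * ennreal ((1 - exp (-(H/8))) / 16)"
      using \<open>0 \<le> 1 - exp (-(H/8))\<close> by (subst ennreal_mult) auto
    finally show ?thesis .
  qed
  finally show ?thesis
    unfolding H_def by (simp add: ennreal_mult_le_mult_iff)
qed

lemma minimax_risk_ge_tent_height:
  assumes "0 < \<alpha>" "\<alpha> \<le> 1" "0 < M" "1 \<le> m" "1 \<le> n"
    and "real n * tent_height \<alpha> M m / real m \<le> 1/2"
  shows "ennreal ((1 - exp (-(tent_height \<alpha> M m / 8))) / 16) \<le> minimax_risk n (holder_class \<alpha> M)"
  unfolding minimax_risk_def by (intro INF_greatest sup_risk_ge_tent_height assms)

section \<open>Choice of the number of cells\<close>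

definition minimax_rate :: "real \<Rightarrow> real \<Rightarrow> real \<Rightarrow> real" where
  "minimax_rate \<alpha> M n = ((3 * M powr (1/\<alpha>)) / (2 powr (4 + \<alpha> + 3/\<alpha>) * n)) powr (\<alpha> / (1 + \<alpha>))"

lemma one_minus_exp_ge_min:
  assumes "0 \<le> (y::real)"
  shows "(1 - exp (-1)) * min y 1 \<le> 1 - exp (-y)"
proof (cases "y \<le> 1")
  case True
  have "convex_on UNIV (\<lambda>x::real. exp (1 * x))" by (rule convex_on_exp) simp
  from convex_onD[OF this, of y 0 "-1"] True assms
  have "exp (-y) \<le> (1 - y) + y * exp (-1)"
    by simp
  then show ?thesis using True by (simp add: algebra_simps)
qed simp

lemma ln_minimax_rate:
  fixes \<alpha> M n :: real
  assumes "0 < \<alpha>" "0 < M" "0 < n"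
  shows "(1 + \<alpha>) * ln (minimax_rate \<alpha> M n)
    = \<alpha> * ln 3 + ln M - (4 * \<alpha> + \<alpha>^2 + 3) * ln 2 - \<alpha> * ln n"
proof -
  have "ln ((3 * M powr (1/\<alpha>)) / (2 powr (4 + \<alpha> + 3/\<alpha>) * n))
      = ln 3 + (1/\<alpha>) * ln M - ((4 + \<alpha> + 3/\<alpha>) * ln 2 + ln n)"
    using assms by (simp add: ln_mult ln_div)
  moreover have "(1 + \<alpha>) * (\<alpha> / (1 + \<alpha>) * L) = \<alpha> * L" for L
    using assms(1) by (simp add: field_simps)
  ultimately have "(1 + \<alpha>) * ln (minimax_rate \<alpha> M n)
      = \<alpha> * (ln 3 + (1/\<alpha>) * ln M - ((4 + \<alpha> + 3/\<alpha>) * ln 2 + ln n))"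
    by (simp only: minimax_rate_def ln_powr)
  also have "\<dots> = \<alpha> * ln 3 + \<alpha> * (1/\<alpha>) * ln M - (4 * \<alpha> + \<alpha> * \<alpha> + \<alpha> * (3/\<alpha>)) * ln 2 - \<alpha> * ln n"
    by (simp add: algebra_simps)
  also have "\<dots> = \<alpha> * ln 3 + ln M - (4 * \<alpha> + \<alpha>^2 + 3) * ln 2 - \<alpha> * ln n"
    using assms(1) by (simp add: power2_eq_square)
  finally show ?thesis .
qed

lemma minimax_rate_le_height_bound:
  assumes "0 < \<alpha>" "\<alpha> \<le> 1" "0 < M" "1 \<le> n" "0 < t"
    and t: "t powr (1 + \<alpha>) = 2 * real n * M * (1/2) powr \<alpha>"
  shows "minimax_rate \<alpha> M (real n) \<le> M * (1 / (4 * t)) powr \<alpha>"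
    (is "?R \<le> ?H")
proof -
  have n: "0 < real n" using assms(4) by simp
  have "(1 + \<alpha>) * ln t = ln (t powr (1 + \<alpha>))"
    using assms(5) by (simp add: ln_powr)
  also have "\<dots> = ln 2 + ln (real n) + ln M - \<alpha> * ln 2"
    unfolding t using assms(3) n by (simp add: ln_mult ln_div powr_divide)
  finally have ln_t: "(1 + \<alpha>) * ln t = ln 2 + ln (real n) + ln M - \<alpha> * ln 2" .
  have "(1 + \<alpha>) * ln ?H = (1 + \<alpha>) * ln M - \<alpha> * ((1 + \<alpha>) * ln 4 + (1 + \<alpha>) * ln t)"
    using assms by (simp add: ln_mult ln_div powr_divide algebra_simps)
  also have "\<dots> = ln M - (3 * \<alpha> + \<alpha>^2) * ln 2 - \<alpha> * ln (real n)"
    unfolding ln_t using ln_mult[of 2 2] by (simp add: algebra_simps power2_eq_square)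
  finally have ln_H: "(1 + \<alpha>) * ln ?H = ln M - (3 * \<alpha> + \<alpha>^2) * ln 2 - \<alpha> * ln (real n)" .
  have "ln 3 \<le> 2 * ln (2::real)"
    using ln_mult[of 2 2] ln_le_cancel_iff[of 3 4] by simp
  then have "\<alpha> * ln 3 \<le> \<alpha> * (2 * ln 2)"
    using assms(1) by (intro mult_left_mono) auto
  moreover have "\<alpha> * ln 2 \<le> 1 * ln 2"
    using assms(2) by (intro mult_right_mono) auto
  moreover have "0 \<le> ln (2::real)" by simp
  ultimately have "\<alpha> * ln 3 \<le> \<alpha> * ln 2 + 3 * ln 2"
    by linarith
  then have "(1 + \<alpha>) * ln ?R \<le> (1 + \<alpha>) * ln ?H"
    unfolding ln_H ln_minimax_rate[OF assms(1,3) n] by (simp add: algebra_simps power2_eq_square)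
  then have "ln ?R \<le> ln ?H"
    by (rule mult_left_le_imp_le) (use assms(1) in simp)
  moreover have "0 < ?R" "0 < ?H" using assms(3,5) n by (simp_all add: minimax_rate_def)
  ultimately show ?thesis using ln_le_cancel_iff by blast
qed

lemma exists_cell_count:
  assumes "0 < \<alpha>" "\<alpha> \<le> 1" "0 < M" "1 \<le> n"
  shows "\<exists>m\<ge>1. real n * tent_height \<alpha> M m / real m \<le> 1/2 \<and>
    min (minimax_rate \<alpha> M (real n)) (M / 8) \<le> tent_height \<alpha> M m"
proof (cases "2 * real n * M * (1/2) powr \<alpha> \<le> 1")
  case True
  have "1/2 \<le> (1/2::real) powr \<alpha>"
    using powr_mono'[of \<alpha> 1 "1/2::real"] assms(2) by simp
  then have "M / 8 \<le> tent_height \<alpha> M 1"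
    using assms(3) by (simp add: tent_height_def)
  moreover have "real n * tent_height \<alpha> M 1 / real 1 \<le> 1/2"
    using True by (simp add: tent_height_def)
  ultimately show ?thesis by (intro exI[of _ 1]) auto
next
  case False
  define Q where "Q = 2 * real n * M * (1/2) powr \<alpha>"
  define t where "t = Q powr (1 / (1 + \<alpha>))"
  define m where "m = nat \<lceil>t\<rceil>"
  have "1 < Q" using False by (simp add: Q_def)
  then have t: "1 \<le> t" "t powr (1 + \<alpha>) = Q"
    using assms(1) by (auto simp: t_def powr_powr intro: ge_one_powr_ge_zero)
  have m: "t \<le> real m" "real m \<le> 2 * t" "1 \<le> m"
    using t(1) unfolding m_def by linarith+
  have "Q \<le> real m powr (1 + \<alpha>)"
    using t m(1) assms(1) by (metis powr_mono2 add_pos_pos less_le_trans zero_less_one less_imp_le)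
  moreover have split: "(1 / (2 * real m)) powr \<alpha> = (1/2) powr \<alpha> / real m powr \<alpha>"
    by (simp add: powr_divide[symmetric])
  moreover have "real m * real m powr \<alpha> = real m powr (1 + \<alpha>)"
    using m(3) by (simp add: powr_add)
  ultimately have "real n * tent_height \<alpha> M m / real m \<le> 1/2"
    using m(3) unfolding tent_height_def split Q_def by (simp add: field_simps)
  moreover have "M * (1 / (4 * t)) powr \<alpha> \<le> tent_height \<alpha> M m"
    unfolding tent_height_def using m assms(1,3) t(1)
    by (intro mult_left_mono powr_mono2) (auto simp: field_simps)
  ultimately show ?thesis
    using minimax_rate_le_height_bound[OF assms, of t] t m(3) unfolding Q_def
    by (intro exI[of _ m]) auto
qed

lemma rate_constant_le:
  assumes "0 \<le> H" "r \<le> H"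
  shows "(1 - exp (-1)) / 144 * min r (1 + sqrt 3 / 2) \<le> (1 - exp (-(H/8))) / 16"
proof -
  have "sqrt 3 \<le> sqrt (9::real)" by (rule real_sqrt_le_mono) simp
  moreover have "sqrt 9 = (3::real)" by (rule real_sqrt_unique) simp_all
  ultimately have "sqrt 3 \<le> (3::real)" by simp
  have "min r (1 + sqrt 3 / 2) \<le> 9 * min (H/8) 1"
  proof (cases "H/8 \<le> 1")
    case True
    then have "min (H/8) 1 = H/8" by simp
    then show ?thesis using min.cobounded1[of r "1 + sqrt 3 / 2"] assms by linarith
  next
    case False
    then have "min (H/8) 1 = 1" by simp
    then show ?thesis using min.cobounded2[of r "1 + sqrt 3 / 2"] \<open>sqrt 3 \<le> 3\<close> by linarith
  qed
  then have "(1 - exp (-1)) / 144 * min r (1 + sqrt 3 / 2) \<le> (1 - exp (-1)) * min (H/8) 1 / 16"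
    by (simp add: mult_left_mono)
  also have "\<dots> \<le> (1 - exp (-(H/8))) / 16"
    using one_minus_exp_ge_min[of "H/8"] assms(1) by simp
  finally show ?thesis .
qed

theorem proposition4:
  fixes \<alpha> M :: real and n :: nat
  assumes "0 < \<alpha>" and "\<alpha> \<le> 1" and "0 < M" and "1 \<le> n"
  shows "ennreal ((1 - exp (-1)) / 144 *
           min (min (((3 * M powr (1/\<alpha>)) / (2 powr (4 + \<alpha> + 3/\<alpha>) * real n)) powr (\<alpha> / (1 + \<alpha>)))
                    (M / 8))
               (1 + sqrt 3 / 2))
         \<le> minimax_risk n (holder_class \<alpha> M)"
proof -
  obtain m where m: "1 \<le> m" "real n * tent_height \<alpha> M m / real m \<le> 1/2"
    and rate: "min (minimax_rate \<alpha> M (real n)) (M / 8) \<le> tent_height \<alpha> M m"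
    using exists_cell_count[OF assms] by blast
  have "0 \<le> tent_height \<alpha> M m" using assms(3) by (simp add: tent_height_def)
  then have "(1 - exp (-1)) / 144 * min (min (minimax_rate \<alpha> M (real n)) (M / 8)) (1 + sqrt 3 / 2)
      \<le> (1 - exp (-(tent_height \<alpha> M m / 8))) / 16"
    using rate by (rule rate_constant_le)
  then have "ennreal ((1 - exp (-1)) / 144 * min (min (minimax_rate \<alpha> M (real n)) (M / 8)) (1 + sqrt 3 / 2))
      \<le> ennreal ((1 - exp (-(tent_height \<alpha> M m / 8))) / 16)"
    by (rule ennreal_leI)
  also have "\<dots> \<le> minimax_risk n (holder_class \<alpha> M)"
    using minimax_risk_ge_tent_height[OF assms(1-3) m(1) assms(4) m(2)] .
  finally show ?thesis unfolding minimax_rate_def .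
qed

end
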